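(* A regular Hausdorff space $X$ is a $\gamma$-space if and only if $\mathcal{F}(X)$ is a $\gamma$-space.
   Context: $\mathcal{F}(X)$ is the set of nonempty finite subsets of $X$ with the Vietoris topology (base: $\langle U_1,\dots,U_k\rangle=\{A: A\subset\bigcup_i U_i,\ A\cap U_j\neq\emptyset\ \forall j\}$, $U_i$ open in $X$). A space $(Y,\tau_Y)$ is a $\gamma$-space if there is a function $g:\omega\times Y\to\tau_Y$ such that (i) $\{g(n,x): n\in\omega\}$ is a neighborhood base at $x$ for each $x\in Y$, and (ii) for each $n\in\omega$ and $x\in Y$ there is $m\in\omega$ such that $y\in g(m,x)$ implies $g(n,y)\subset g(n,x)$. *)

theory Defs
  imports "HOL-Analysis.Analysis"
begin

definition vietoris_basic :: "'a topology \<Rightarrow> 'a set set \<Rightarrow> 'a set set" where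
  "vietoris_basic X \<U> =
     {A. finite A \<and> A \<noteq> {} \<and> A \<subseteq> topspace X \<and> A \<subseteq> \<Union>\<U> \<and> (\<forall>U\<in>\<U>. A \<inter> U \<noteq> {})}"

definition fin_vietoris :: "'a topology \<Rightarrow> 'a set topology" where
  "fin_vietoris X = topology_generated_by
     {vietoris_basic X \<U> | \<U>. finite \<U> \<and> \<U> \<noteq> {} \<and> (\<forall>U\<in>\<U>. openin X U)}"

definition gamma_space :: "'b topology \<Rightarrow> bool" where
  "gamma_space Y \<longleftrightarrow> (\<exists>g :: nat \<Rightarrow> 'b \<Rightarrow> 'b set.
     (\<forall>n. \<forall>x\<in>topspace Y. openin Y (g n x) \<and> x \<in> g n x) \<and>
     (\<forall>x\<in>topspace Y. \<forall>U. openin Y U \<and> x \<in> U \<longrightarrow> (\<exists>n. g n x \<subseteq> U)) \<and>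
     (\<forall>n. \<forall>x\<in>topspace Y. \<exists>m. \<forall>y\<in>g m x. g n y \<subseteq> g n x))"

end

theory Submission
  imports Defs
begin

text \<open>
  Replacing \<open>g(n,x)\<close> by \<open>g(0,x) \<inter> \<dots> \<inter> g(n,x)\<close> one may assume that it decreases in
  \<open>n\<close>; then both of its defining properties hold for all large \<open>n\<close>, so finitely many points
  always admit a common index. If \<open>g\<close> is such a gamma-base of \<open>X\<close>, then
  \<open>G(n,A) = \<langle>g(n,a) : a \<in> A\<rangle>\<close> is one of \<open>\<F>(X)\<close>: a basic neighbourhood \<open>\<langle>U\<^sub>1,\<dots>,U\<^sub>k\<rangle>\<close>
  of \<open>A\<close> contains \<open>G(n,A)\<close> as soon as \<open>g(n,a) \<subseteq> U\<^sub>j\<close> whenever \<open>a \<in> U\<^sub>j\<close>, and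
  \<open>G(n,B) \<subseteq> G(n,A)\<close> for \<open>B \<in> G(m,A)\<close> as soon as \<open>g(n,b) \<subseteq> g(n,a)\<close> for \<open>b \<in> g(m,a)\<close>.
  Conversely, \<open>X\<close> carries the initial topology of \<open>x \<mapsto> {x}\<close> into \<open>\<F>(X)\<close>, and
  gamma-bases pull back along such maps.
\<close>

definition gamma_base :: "'b topology \<Rightarrow> (nat \<Rightarrow> 'b \<Rightarrow> 'b set) \<Rightarrow> bool" where
  "gamma_base Y g \<longleftrightarrow>
     (\<forall>n. \<forall>x\<in>topspace Y. openin Y (g n x) \<and> x \<in> g n x) \<and>
     (\<forall>x\<in>topspace Y. \<forall>U. openin Y U \<and> x \<in> U \<longrightarrow> (\<exists>n. g n x \<subseteq> U)) \<and>
     (\<forall>n. \<forall>x\<in>topspace Y. \<exists>m. \<forall>y\<in>g m x. g n y \<subseteq> g n x)"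

lemma gamma_space_iff_gamma_base: "gamma_space Y \<longleftrightarrow> (\<exists>g. gamma_base Y g)"
  unfolding gamma_space_def gamma_base_def ..

lemma gamma_baseI:
  assumes "\<And>n x. x \<in> topspace Y \<Longrightarrow> openin Y (g n x)"
    and "\<And>n x. x \<in> topspace Y \<Longrightarrow> x \<in> g n x"
    and "\<And>x U. x \<in> topspace Y \<Longrightarrow> openin Y U \<Longrightarrow> x \<in> U \<Longrightarrow> \<exists>n. g n x \<subseteq> U"
    and "\<And>n x. x \<in> topspace Y \<Longrightarrow> \<exists>m. \<forall>y\<in>g m x. g n y \<subseteq> g n x"
  shows "gamma_base Y g"
  unfolding gamma_base_def using assms by simp

context
  fixes Y :: "'b topology" and g :: "nat \<Rightarrow> 'b \<Rightarrow> 'b set"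
  assumes g: "gamma_base Y g"
begin

lemma gamma_base_openin: "x \<in> topspace Y \<Longrightarrow> openin Y (g n x)"
  using g unfolding gamma_base_def by simp

lemma gamma_base_mem: "x \<in> topspace Y \<Longrightarrow> x \<in> g n x"
  using g unfolding gamma_base_def by simp

lemma gamma_base_nhds: "openin Y U \<Longrightarrow> x \<in> U \<Longrightarrow> \<exists>n. g n x \<subseteq> U"
  using g openin_subset unfolding gamma_base_def by (meson subsetD)

lemma gamma_base_nested: "x \<in> topspace Y \<Longrightarrow> \<exists>m. \<forall>y\<in>g m x. g n y \<subseteq> g n x"
  using g unfolding gamma_base_def by simp

lemma gamma_base_Inter_atMost: "gamma_base Y (\<lambda>n x. \<Inter>i\<le>n. g i x)"
proof (rule gamma_baseI)
  fix n x assume x: "x \<in> topspace Y"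
  show "openin Y (\<Inter>i\<le>n. g i x)"
    by (rule openin_INT2) (auto simp: gamma_base_openin x)
  show "x \<in> (\<Inter>i\<le>n. g i x)"
    by (simp add: gamma_base_mem x)
  obtain m where m: "\<And>i y. y \<in> g (m i) x \<Longrightarrow> g i y \<subseteq> g i x"
    using choice[of "\<lambda>i m. \<forall>y\<in>g m x. g i y \<subseteq> g i x"] gamma_base_nested[OF x] by blast
  define M where "M = Max (m ` {..n})"
  have "(\<Inter>i\<le>n. g i y) \<subseteq> (\<Inter>i\<le>n. g i x)" if y: "y \<in> (\<Inter>i\<le>M. g i x)" for y
  proof (rule INF_mono)
    fix i assume "i \<in> {..n}"
    then have "m i \<le> M"
      unfolding M_def by (intro Max_ge) auto
    then have "y \<in> g (m i) x"
      using y by blast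
    then show "\<exists>j\<in>{..n}. g j y \<subseteq> g i x"
      using m \<open>i \<in> {..n}\<close> by blast
  qed
  then show "\<exists>m. \<forall>y\<in>\<Inter>i\<le>m. g i x. (\<Inter>i\<le>n. g i y) \<subseteq> (\<Inter>i\<le>n. g i x)"
    by blast
next
  fix x U assume "openin Y U" "x \<in> U"
  then obtain n where "g n x \<subseteq> U"
    using gamma_base_nhds by blast
  then show "\<exists>n. (\<Inter>i\<le>n. g i x) \<subseteq> U"
    by blast
qed

end

lemma obtain_decreasing_gamma_base:
  assumes "gamma_space Y"
  obtains g where "gamma_base Y g" "\<And>x. decseq (\<lambda>n. g n x)"
proof -
  obtain g where "gamma_base Y g"
    using assms gamma_space_iff_gamma_base by blast
  then show thesis
    by (rule that[OF gamma_base_Inter_atMost]) (auto simp: decseq_def)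
qed

context
  fixes Y :: "'b topology" and g :: "nat \<Rightarrow> 'b \<Rightarrow> 'b set"
  assumes g: "gamma_base Y g" and dec: "\<And>x. decseq (\<lambda>n. g n x)"
begin

lemma decreasing_gamma_base_eventually_subset:
  assumes "openin Y U" "x \<in> U"
  shows "\<forall>\<^sub>F n in sequentially. g n x \<subseteq> U"
proof -
  obtain n where "g n x \<subseteq> U"
    using gamma_base_nhds[OF g assms] by blast
  with dec show ?thesis
    unfolding eventually_sequentially decseq_def by blast
qed

lemma decreasing_gamma_base_eventually_nested:
  assumes "x \<in> topspace Y"
  shows "\<forall>\<^sub>F m in sequentially. \<forall>y\<in>g m x. g n y \<subseteq> g n x"
proof -
  obtain m where "\<forall>y\<in>g m x. g n y \<subseteq> g n x"
    using gamma_base_nested[OF g assms] by blast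
  with dec show ?thesis
    unfolding eventually_sequentially decseq_def by blast
qed

end

lemma gamma_space_initial_topology:
  assumes "gamma_space Y" and f: "continuous_map X Y f"
    and initial: "\<And>U x. openin X U \<Longrightarrow> x \<in> U \<Longrightarrow>
                   \<exists>V. openin Y V \<and> f x \<in> V \<and> {y \<in> topspace X. f y \<in> V} \<subseteq> U"
  shows "gamma_space X"
proof -
  obtain g where g: "gamma_base Y g"
    using assms(1) gamma_space_iff_gamma_base by blast
  have fx: "f x \<in> topspace Y" if "x \<in> topspace X" for x
    using f that by (auto simp: continuous_map_def)
  have "gamma_base X (\<lambda>n x. {y \<in> topspace X. f y \<in> g n (f x)})"
  proof (rule gamma_baseI)
    fix n x assume x: "x \<in> topspace X"
    show "openin X {y \<in> topspace X. f y \<in> g n (f x)}"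
      using f gamma_base_openin[OF g fx[OF x]] by (rule openin_continuous_map_preimage)
    show "x \<in> {y \<in> topspace X. f y \<in> g n (f x)}"
      using gamma_base_mem[OF g fx[OF x]] x by simp
    obtain m where "\<forall>z\<in>g m (f x). g n z \<subseteq> g n (f x)"
      using gamma_base_nested[OF g fx[OF x]] by blast
    then show "\<exists>m. \<forall>y\<in>{y \<in> topspace X. f y \<in> g m (f x)}.
                 {z \<in> topspace X. f z \<in> g n (f y)} \<subseteq> {z \<in> topspace X. f z \<in> g n (f x)}"
      by blast
  next
    fix x U assume "openin X U" "x \<in> U"
    then obtain V where V: "openin Y V" "f x \<in> V" "{y \<in> topspace X. f y \<in> V} \<subseteq> U"
      using initial by blast
    then obtain n where "g n (f x) \<subseteq> V"
      using gamma_base_nhds[OF g] by blast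
    with V(3) show "\<exists>n. {y \<in> topspace X. f y \<in> g n (f x)} \<subseteq> U"
      by blast
  qed
  then show ?thesis
    using gamma_space_iff_gamma_base by blast
qed

lemma generate_topology_on_eventually_subset:
  assumes "generate_topology_on \<S> W" "x \<in> W"
    and "\<And>S. S \<in> \<S> \<Longrightarrow> x \<in> S \<Longrightarrow> \<forall>\<^sub>F i in F. N i \<subseteq> S"
  shows "\<forall>\<^sub>F i in F. N i \<subseteq> W"
  using assms
proof (induction rule: generate_topology_on.induct)
  case (Int a b)
  then show ?case
    by (auto elim: eventually_elim2)
next
  case (UN K)
  then obtain k where "k \<in> K" "x \<in> k"
    by blast
  then have "\<forall>\<^sub>F i in F. N i \<subseteq> k"
    using UN.IH UN.prems(2) by blast
  then show ?case
    by (rule eventually_mono) (use \<open>k \<in> K\<close> in blast)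
qed auto

definition vietoris_basis :: "'a topology \<Rightarrow> 'a set set set" where
  "vietoris_basis X = {vietoris_basic X \<U> |\<U>. finite \<U> \<and> \<U> \<noteq> {} \<and> (\<forall>U\<in>\<U>. openin X U)}"

lemma fin_vietoris_eq_generated: "fin_vietoris X = topology_generated_by (vietoris_basis X)"
  by (simp add: fin_vietoris_def vietoris_basis_def)

lemma topspace_fin_vietoris:
  "topspace (fin_vietoris X) = {A. finite A \<and> A \<noteq> {} \<and> A \<subseteq> topspace X}"
proof (intro subset_antisym subsetI)
  fix A assume "A \<in> topspace (fin_vietoris X)"
  then show "A \<in> {A. finite A \<and> A \<noteq> {} \<and> A \<subseteq> topspace X}"
    unfolding fin_vietoris_eq_generated topology_generated_by_topspace vietoris_basis_def
      vietoris_basic_def by blast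
next
  fix A assume "A \<in> {A. finite A \<and> A \<noteq> {} \<and> A \<subseteq> topspace X}"
  then have "A \<in> vietoris_basic X {topspace X}"
    by (auto simp: vietoris_basic_def)
  then show "A \<in> topspace (fin_vietoris X)"
    unfolding fin_vietoris_eq_generated topology_generated_by_topspace vietoris_basis_def by blast
qed

lemma openin_fin_vietoris_basic:
  assumes "finite \<U>" "\<U> \<noteq> {}" "\<forall>U\<in>\<U>. openin X U"
  shows "openin (fin_vietoris X) (vietoris_basic X \<U>)"
  unfolding fin_vietoris_eq_generated
  by (rule topology_generated_by_Basis) (use assms in \<open>auto simp: vietoris_basis_def\<close>)

lemma vietoris_basic_refine:
  assumes "B \<in> vietoris_basic X (W ` A)"
    and "\<And>a b. a \<in> A \<Longrightarrow> b \<in> B \<Longrightarrow> b \<in> W a \<Longrightarrow> V b \<subseteq> V' a"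
  shows "vietoris_basic X (V ` B) \<subseteq> vietoris_basic X (V' ` A)"
proof
  fix C assume "C \<in> vietoris_basic X (V ` B)"
  then have C: "finite C" "C \<noteq> {}" "C \<subseteq> topspace X"
    and C_cover: "C \<subseteq> (\<Union>b\<in>B. V b)" and C_meets: "\<forall>b\<in>B. C \<inter> V b \<noteq> {}"
    by (auto simp: vietoris_basic_def)
  have B_cover: "B \<subseteq> (\<Union>a\<in>A. W a)" and B_meets: "\<forall>a\<in>A. B \<inter> W a \<noteq> {}"
    using assms(1) by (auto simp: vietoris_basic_def)
  have "C \<subseteq> (\<Union>a\<in>A. V' a)"
  proof
    fix c assume "c \<in> C"
    then obtain b where b: "b \<in> B" "c \<in> V b"
      using C_cover by blast
    then obtain a where "a \<in> A" "b \<in> W a"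
      using B_cover by blast
    with b assms(2) show "c \<in> (\<Union>a\<in>A. V' a)"
      by blast
  qed
  moreover have "C \<inter> V' a \<noteq> {}" if "a \<in> A" for a
  proof -
    obtain b where "b \<in> B" "b \<in> W a"
      using B_meets \<open>a \<in> A\<close> by blast
    with C_meets assms(2)[OF \<open>a \<in> A\<close>] show ?thesis
      by blast
  qed
  ultimately show "C \<in> vietoris_basic X (V' ` A)"
    using C by (auto simp: vietoris_basic_def)
qed

lemma decreasing_gamma_base_vietoris_eventually_subset:
  assumes g: "gamma_base X g" and dec: "\<And>x. decseq (\<lambda>n. g n x)"
    and A: "A \<in> vietoris_basic X \<U>" and \<U>: "finite \<U>" "\<forall>U\<in>\<U>. openin X U"
  shows "\<forall>\<^sub>F n in sequentially. vietoris_basic X (g n ` A) \<subseteq> vietoris_basic X \<U>"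
proof -
  have "finite A"
    using A by (simp add: vietoris_basic_def)
  have "\<forall>\<^sub>F n in sequentially. \<forall>U\<in>\<U>. \<forall>a\<in>A \<inter> U. g n a \<subseteq> U"
  proof (rule eventually_ball_finite[OF \<U>(1)], rule ballI)
    fix U assume "U \<in> \<U>"
    have "\<forall>a\<in>A \<inter> U. \<forall>\<^sub>F n in sequentially. g n a \<subseteq> U"
      using decreasing_gamma_base_eventually_subset[OF g dec] \<U>(2) \<open>U \<in> \<U>\<close> by blast
    then show "\<forall>\<^sub>F n in sequentially. \<forall>a\<in>A \<inter> U. g n a \<subseteq> U"
      using \<open>finite A\<close> by (simp add: eventually_ball_finite)
  qed
  then show ?thesis
  proof (rule eventually_mono)
    fix n assume "\<forall>U\<in>\<U>. \<forall>a\<in>A \<inter> U. g n a \<subseteq> U"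
    then show "vietoris_basic X (g n ` A) \<subseteq> vietoris_basic X \<U>"
      using vietoris_basic_refine[where B = A and W = "\<lambda>U. U" and A = \<U> and V = "g n" and V' = "\<lambda>U. U"] A
      by simp
  qed
qed

lemma gamma_base_fin_vietoris:
  assumes g: "gamma_base X g" and dec: "\<And>x. decseq (\<lambda>n. g n x)"
  shows "gamma_base (fin_vietoris X) (\<lambda>n A. vietoris_basic X (g n ` A))"
proof (rule gamma_baseI)
  fix n A assume "A \<in> topspace (fin_vietoris X)"
  then have A: "finite A" "A \<noteq> {}" "A \<subseteq> topspace X"
    by (auto simp: topspace_fin_vietoris)
  show "openin (fin_vietoris X) (vietoris_basic X (g n ` A))"
    using A gamma_base_openin[OF g] by (intro openin_fin_vietoris_basic) auto
  show "A \<in> vietoris_basic X (g n ` A)"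
    using A gamma_base_mem[OF g] by (auto simp: vietoris_basic_def)
  have "\<forall>\<^sub>F m in sequentially. \<forall>a\<in>A. \<forall>b\<in>g m a. g n b \<subseteq> g n a"
    using A decreasing_gamma_base_eventually_nested[OF g dec]
    by (intro eventually_ball_finite[of A]) auto
  then obtain m where "\<forall>a\<in>A. \<forall>b\<in>g m a. g n b \<subseteq> g n a"
    by (auto simp: eventually_sequentially)
  then show "\<exists>m. \<forall>B\<in>vietoris_basic X (g m ` A). vietoris_basic X (g n ` B) \<subseteq> vietoris_basic X (g n ` A)"
    using vietoris_basic_refine[where W = "g m" and V = "g n" and V' = "g n"] by blast
next
  fix A W assume W: "openin (fin_vietoris X) W" "A \<in> W"
  have "\<forall>\<^sub>F n in sequentially. vietoris_basic X (g n ` A) \<subseteq> W"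
  proof (rule generate_topology_on_eventually_subset)
    show "generate_topology_on (vietoris_basis X) W"
      using W(1) by (simp add: fin_vietoris_eq_generated openin_topology_generated_by_iff)
  next
    fix S assume "S \<in> vietoris_basis X" "A \<in> S"
    then show "\<forall>\<^sub>F n in sequentially. vietoris_basic X (g n ` A) \<subseteq> S"
      using decreasing_gamma_base_vietoris_eventually_subset[OF g dec]
      unfolding vietoris_basis_def by blast
  qed (fact W(2))
  then show "\<exists>n. vietoris_basic X (g n ` A) \<subseteq> W"
    by (auto simp: eventually_sequentially)
qed

lemma continuous_map_singleton_fin_vietoris: "continuous_map X (fin_vietoris X) (\<lambda>x. {x})"
  unfolding fin_vietoris_eq_generated
proof (rule continuous_on_generated_topo)
  fix S assume "S \<in> vietoris_basis X"
  then obtain \<U> where "S = vietoris_basic X \<U>" "finite \<U>" "\<U> \<noteq> {}" "\<forall>U\<in>\<U>. openin X U"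
    unfolding vietoris_basis_def by blast
  moreover from this have "(\<lambda>x. {x}) -` S \<inter> topspace X = \<Inter>(insert (topspace X) \<U>)"
    by (auto simp: vietoris_basic_def)
  moreover have "openin X (\<Inter>(insert (topspace X) \<U>))"
    by (rule openin_Inter) (use calculation in auto)
  ultimately show "openin X ((\<lambda>x. {x}) -` S \<inter> topspace X)"
    by simp
next
  have "{x} \<in> vietoris_basic X {topspace X}" if "x \<in> topspace X" for x
    using that by (simp add: vietoris_basic_def)
  then show "(\<lambda>x. {x}) ` topspace X \<subseteq> \<Union>(vietoris_basis X)"
    unfolding vietoris_basis_def by blast
qed

lemma singleton_nhds_fin_vietoris:
  assumes "openin X U" "x \<in> U"
  shows "\<exists>V. openin (fin_vietoris X) V \<and> {x} \<in> V \<and> {y \<in> topspace X. {y} \<in> V} \<subseteq> U"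
proof (intro exI conjI)
  show "openin (fin_vietoris X) (vietoris_basic X {U})"
    using assms by (intro openin_fin_vietoris_basic) auto
qed (use assms openin_subset in \<open>auto simp: vietoris_basic_def\<close>)

theorem theorem4p10:
  fixes X :: "'a topology"
  assumes "regular_space X" and "Hausdorff_space X"
  shows "gamma_space X \<longleftrightarrow> gamma_space (fin_vietoris X)"
proof
  assume "gamma_space X"
  then obtain g where "gamma_base X g" "\<And>x. decseq (\<lambda>n. g n x)"
    using obtain_decreasing_gamma_base by blast
  then show "gamma_space (fin_vietoris X)"
    using gamma_base_fin_vietoris gamma_space_iff_gamma_base by blast
next
  assume "gamma_space (fin_vietoris X)"
  then show "gamma_space X"
    using continuous_map_singleton_fin_vietoris singleton_nhds_fin_vietoris
    by (rule gamma_space_initial_topology)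
qed

end
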